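(* Let $(q_n)_{n\ge0}$ be a sequence of real numbers. There exists a non-negative Borel measure $M$ on $\mathbb R$ such that $q_n=\int_{\mathbb R}\mu^n\,dM(\mu)$ for all $n=0,1,2,\ldots$ and $M(\mathbb R\setminus(-1,1))=0$ if and only if $\sum_{n,m\ge0}q_{n+m}g_m\bar g_n\ge0$ for all $g\in\mathcal D$ and $q_n\to0$ as $n\to\infty$ (equivalently, given the non-negativity, the form $\sum_{n,m\ge0}q_{n+m}g_m\bar g_n$ on $\mathcal D$ admits a closure in $\ell^2(\mathbb Z_+)$).
   Context: $\ell^2(\mathbb Z_+)$ is the Hilbert space of square-summable complex sequences $g=(g_0,g_1,\ldots)$, and $\mathcal D$ is the dense subspace of sequences with finitely many non-zero entries. A form admits a closure if it has a closed extension in $\ell^2(\mathbb Z_+)$. *)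

theory Defs
  imports "HOL-Analysis.Analysis" "HOL-Library.Complex_Order"
begin

definition finseq :: "(nat \<Rightarrow> complex) set" where
  "finseq = {g. finite {n. g n \<noteq> 0}}"

definition hankel_form :: "(nat \<Rightarrow> real) \<Rightarrow> (nat \<Rightarrow> complex) \<Rightarrow> complex" where
  "hankel_form q g = (\<Sum>n\<in>{k. g k \<noteq> 0}. \<Sum>m\<in>{k. g k \<noteq> 0}.
       complex_of_real (q (n + m)) * g m * cnj (g n))"

end

theory Submission
  imports Defs "HOL-Computational_Algebra.Polynomial" "HOL-Combinatorics.Stirling"
    "HOL-Probability.Probability"
begin

text \<open>Necessity is direct: the Hankel form is the integral of \<open>|\<Sum>m. g m * \<mu>^m|^2\<close>, and
  dominated convergence gives \<open>q n \<longlonglongrightarrow> 0\<close> when \<open>M\<close> lives on \<open>(-1,1)\<close>.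

  For sufficiency let \<open>L\<close> be the linear functional on real polynomials with \<open>L(X^n) = q n\<close>.
  Positivity of the Hankel form says \<open>L(p^2) \<ge> 0\<close>. By Cauchy--Schwarz the sequence
  \<open>k \<mapsto> L(X^(2k) p^2)\<close> is log-convex, and it is bounded because \<open>q\<close> is, so it cannot
  increase: \<open>L(X^2 p^2) \<le> L(p^2)\<close>. Hence \<open>L\<close> is non-negative on every product
  \<open>(1+X)^a (1-X)^b\<close>, which is Hausdorff's condition: with \<open>t = (1+X)/2\<close> the numbers
  \<open>(N choose k) L(t^k (1-t)^(N-k))\<close> are non-negative weights at the nodes \<open>2k/N - 1\<close>, and
  (expanding powers into falling factorials by Stirling numbers) their moments converge to \<open>q\<close>.
  Helly's selection theorem gives a limit measure on \<open>[-1,1]\<close> with moments \<open>q\<close>, and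
  \<open>q (2n) \<longlonglongrightarrow> 0\<close> shows that it puts no mass on \<open>\<plusminus>1\<close>.\<close>

section \<open>The moment functional on polynomials\<close>

definition moment_functional :: "(nat \<Rightarrow> real) \<Rightarrow> real poly \<Rightarrow> real" where
  "moment_functional q p = (\<Sum>i\<le>degree p. coeff p i * q i)"

lemma moment_functional_eq_sum_atMost:
  "degree p \<le> n \<Longrightarrow> moment_functional q p = (\<Sum>i\<le>n. coeff p i * q i)"
  unfolding moment_functional_def by (rule sum.mono_neutral_left) (auto simp: coeff_eq_0)

lemma moment_functional_add: "moment_functional q (p + r) = moment_functional q p + moment_functional q r"
proof -
  let ?n = "max (degree p) (degree r)"
  have "degree (p + r) \<le> ?n" by (rule degree_add_le) auto
  then show ?thesis
    by (simp add: moment_functional_eq_sum_atMost[of _ ?n] sum.distrib algebra_simps)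
qed

lemma moment_functional_smult: "moment_functional q (smult c p) = c * moment_functional q p"
  by (simp add: moment_functional_eq_sum_atMost[of _ "degree p"] sum_distrib_left mult.assoc)

lemma moment_functional_diff: "moment_functional q (p - r) = moment_functional q p - moment_functional q r"
  using moment_functional_add[of q p "-r"] moment_functional_smult[of q "-1" r] by simp

lemma moment_functional_sum:
  "moment_functional q (\<Sum>a\<in>A. f a) = (\<Sum>a\<in>A. moment_functional q (f a))"
  by (induction A rule: infinite_finite_induct)
     (auto simp: moment_functional_add moment_functional_def[of q 0])

lemma moment_functional_monom: "moment_functional q (monom c k) = c * q k"
proof -
  have "moment_functional q (monom c k) = (\<Sum>i\<le>k. coeff (monom c k) i * q i)"
    by (rule moment_functional_eq_sum_atMost) (simp add: degree_monom_le)
  also have "\<dots> = c * q k"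
    by (subst sum.remove[of _ k]) (auto simp: coeff_monom)
  finally show ?thesis .
qed

lemma moment_functional_one [simp]: "moment_functional q 1 = q 0"
  using moment_functional_monom[of q 1 0] by simp

lemma moment_functional_mult:
  "moment_functional q (p * r) =
     (\<Sum>n\<le>degree p. \<Sum>m\<le>degree r. coeff p n * coeff r m * q (n + m))"
proof -
  have "p * r = (\<Sum>n\<le>degree p. monom (coeff p n) n) * (\<Sum>m\<le>degree r. monom (coeff r m) m)"
    by (simp add: poly_as_sum_of_monoms)
  also have "\<dots> = (\<Sum>n\<le>degree p. \<Sum>m\<le>degree r. monom (coeff p n * coeff r m) (n + m))"
    by (simp add: sum_distrib_left sum_distrib_right mult_monom sum.swap[where A="{..degree r}"])
  finally show ?thesis by (simp add: moment_functional_sum moment_functional_monom)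
qed

lemma moment_functional_monom_mult:
  "moment_functional q (monom 1 k * r) = (\<Sum>m\<le>degree r. coeff r m * q (k + m))"
proof -
  have "monom 1 k * r = (\<Sum>m\<le>degree r. monom (coeff r m) (k + m))"
    by (subst (1) poly_as_sum_of_monoms[symmetric]) (simp add: sum_distrib_left mult_monom)
  then show ?thesis by (simp add: moment_functional_sum moment_functional_monom)
qed

lemma moment_functional_monom_mult_bound:
  assumes "\<And>n. \<bar>q n\<bar> \<le> B"
  shows "\<bar>moment_functional q (monom 1 k * r)\<bar> \<le> B * (\<Sum>m\<le>degree r. \<bar>coeff r m\<bar>)"
proof -
  have "\<bar>moment_functional q (monom 1 k * r)\<bar> \<le> (\<Sum>m\<le>degree r. \<bar>coeff r m * q (k + m)\<bar>)"
    unfolding moment_functional_monom_mult by (rule sum_abs)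
  also have "\<dots> \<le> (\<Sum>m\<le>degree r. \<bar>coeff r m\<bar> * B)"
    by (rule sum_mono) (auto simp: abs_mult intro!: mult_left_mono assms)
  finally show ?thesis by (simp add: sum_distrib_left mult.commute)
qed

section \<open>Positivity of the moment functional\<close>

lemma quadratic_nonneg_imp_discriminant_le:
  fixes a b c :: real
  assumes "\<And>t. 0 \<le> a + 2 * t * b + t\<^sup>2 * c" and "0 \<le> c"
  shows "b\<^sup>2 \<le> a * c"
proof (cases "c = 0")
  case True
  have "b = 0"
  proof (rule ccontr)
    assume "b \<noteq> 0"
    have "0 \<le> a + 2 * (-(a + 1) / (2 * b)) * b + (-(a + 1) / (2 * b))\<^sup>2 * c" by (rule assms(1))
    also have "\<dots> = -1" using \<open>b \<noteq> 0\<close> True by (simp add: field_simps)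
    finally show False by simp
  qed
  then show ?thesis using True by simp
next
  case False
  with assms(2) have "c > 0" by simp
  have "0 \<le> a + 2 * (-b / c) * b + (-b / c)\<^sup>2 * c" by (rule assms(1))
  also have "\<dots> = (a * c - b\<^sup>2) / c" using \<open>c > 0\<close> by (simp add: field_simps power2_eq_square)
  finally show ?thesis using \<open>c > 0\<close> by (simp add: zero_le_divide_iff)
qed

lemma bounded_log_convex_imp_le:
  fixes a :: "nat \<Rightarrow> real"
  assumes nonneg: "\<And>k. 0 \<le> a k"
    and log_convex: "\<And>k. (a (Suc k))\<^sup>2 \<le> a k * a (Suc (Suc k))"
    and bounded: "\<And>k. a k \<le> B"
  shows "a 1 \<le> a 0"
proof (rule ccontr)
  assume "\<not> a 1 \<le> a 0"
  then have "a 0 < a 1" by simp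
  have "a 0 > 0"
  proof (rule ccontr)
    assume "\<not> a 0 > 0"
    then have "a 0 = 0" using nonneg[of 0] by simp
    then have "a 1 = 0" using log_convex[of 0] by simp
    then show False using \<open>a 0 < a 1\<close> \<open>a 0 = 0\<close> by simp
  qed
  define r where "r = a 1 / a 0"
  have "r > 1" using \<open>a 0 < a 1\<close> \<open>a 0 > 0\<close> by (simp add: r_def)
  have ratio: "r * a k \<le> a (Suc k) \<and> a k > 0" for k
  proof (induction k)
    case 0
    then show ?case using \<open>a 0 > 0\<close> by (simp add: r_def)
  next
    case (Suc k)
    then have "a k > 0" and "r * a k \<le> a (Suc k)" by auto
    then have pos: "a (Suc k) > 0" using \<open>r > 1\<close> by (smt (verit) mult_pos_pos)
    have "a k * (r * a (Suc k)) \<le> a (Suc k) * a (Suc k)"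
      using \<open>r * a k \<le> a (Suc k)\<close> pos by (simp add: mult_right_mono mult.left_commute)
    also have "\<dots> \<le> a k * a (Suc (Suc k))" using log_convex[of k] by (simp add: power2_eq_square)
    finally show ?case using \<open>a k > 0\<close> pos by simp
  qed
  have geometric: "a 0 * r ^ k \<le> a k" for k
  proof (induction k)
    case (Suc k)
    then have "a 0 * r ^ Suc k \<le> r * a k" using \<open>r > 1\<close> by simp
    then show ?case using ratio[of k] by simp
  qed simp
  obtain n where "B / a 0 < r ^ n" using real_arch_pow[OF \<open>r > 1\<close>] by blast
  then have "B < a 0 * r ^ n" using \<open>a 0 > 0\<close> by (simp add: field_simps)
  then show False using geometric[of n] bounded[of n] by linarith
qed

context
  fixes q :: "nat \<Rightarrow> real"
  assumes hankel_nonneg: "\<forall>g\<in>finseq. 0 \<le> hankel_form q g"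
begin

lemma moment_functional_square_nonneg: "0 \<le> moment_functional q (p * p)"
proof -
  define g where "g i = complex_of_real (coeff p i)" for i
  define S where "S = {k. g k \<noteq> 0}"
  have S: "S \<subseteq> {..degree p}"
    by (auto simp: S_def g_def intro: le_degree)
  then have "g \<in> finseq" by (simp add: finseq_def S_def[symmetric] finite_subset)
  then have "0 \<le> hankel_form q g" using hankel_nonneg by blast
  also have "hankel_form q g = complex_of_real (\<Sum>n\<in>S. \<Sum>m\<in>S. coeff p n * coeff p m * q (n + m))"
    unfolding hankel_form_def S_def[symmetric] by (simp add: g_def mult_ac)
  also have "(\<Sum>n\<in>S. \<Sum>m\<in>S. coeff p n * coeff p m * q (n + m))
      = (\<Sum>n\<le>degree p. \<Sum>m\<le>degree p. coeff p n * coeff p m * q (n + m))"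
  proof -
    have outside: "coeff p k = 0" if "k \<notin> S" for k using that by (simp add: S_def g_def)
    have "(\<Sum>n\<in>S. \<Sum>m\<in>S. coeff p n * coeff p m * q (n + m))
        = (\<Sum>n\<in>S. \<Sum>m\<le>degree p. coeff p n * coeff p m * q (n + m))"
      by (intro sum.cong refl sum.mono_neutral_left S) (auto simp: outside)
    also have "\<dots> = (\<Sum>n\<le>degree p. \<Sum>m\<le>degree p. coeff p n * coeff p m * q (n + m))"
      by (intro sum.mono_neutral_left S) (auto simp: outside)
    finally show ?thesis .
  qed
  also have "\<dots> = moment_functional q (p * p)"
    by (simp add: moment_functional_mult)
  finally show ?thesis by (simp add: less_eq_complex_def)
qed

lemma moment_functional_Cauchy_Schwarz:
  "(moment_functional q (u * v))\<^sup>2 \<le> moment_functional q (u * u) * moment_functional q (v * v)"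
proof (rule quadratic_nonneg_imp_discriminant_le)
  fix t
  have "(u + smult t v) * (u + smult t v)
      = u * u + smult t (u * v) + smult t (u * v) + smult t (smult t (v * v))"
    by (simp only: distrib_left distrib_right mult_smult_left mult_smult_right
        mult.commute[of v u] add.assoc smult_add_right)
  then have "moment_functional q ((u + smult t v) * (u + smult t v)) = moment_functional q (u * u)
      + 2 * t * moment_functional q (u * v) + t\<^sup>2 * moment_functional q (v * v)"
    by (simp only: moment_functional_add moment_functional_smult)
       (simp add: algebra_simps power2_eq_square)
  then show "0 \<le> moment_functional q (u * u) + 2 * t * moment_functional q (u * v)
      + t\<^sup>2 * moment_functional q (v * v)"
    using moment_functional_square_nonneg[of "u + smult t v"] by simp
qed (rule moment_functional_square_nonneg)

context
  fixes B :: real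
  assumes bounded: "\<And>n. \<bar>q n\<bar> \<le> B"
begin

lemma moment_functional_monom2_square_le:
  "moment_functional q (monom 1 2 * (p * p)) \<le> moment_functional q (p * p)"
proof -
  define a where "a k = moment_functional q (monom 1 (2 * k) * (p * p))" for k
  have shift_square: "monom 1 (i + j) * (p * p) = (monom 1 i * p) * (monom 1 j * p)" for i j
  proof -
    have "monom (1::real) (i + j) = monom 1 i * monom 1 j" by (simp add: mult_monom)
    then show ?thesis by (simp only: ac_simps)
  qed
  have a_as_product: "a n = moment_functional q ((monom 1 i * p) * (monom 1 j * p))"
    if "2 * n = i + j" for n i j
    unfolding a_def that shift_square ..
  have "0 \<le> a k" for k
    using a_as_product[of k k k] moment_functional_square_nonneg by simp
  moreover have "(a (Suc k))\<^sup>2 \<le> a k * a (Suc (Suc k))" for k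
    using a_as_product[of "Suc k" k "Suc (Suc k)"] a_as_product[of k k k]
      a_as_product[of "Suc (Suc k)" "Suc (Suc k)" "Suc (Suc k)"] moment_functional_Cauchy_Schwarz
    by simp
  moreover have "a k \<le> B * (\<Sum>m\<le>degree (p * p). \<bar>coeff (p * p) m\<bar>)" for k
    using moment_functional_monom_mult_bound[of q B "2 * k" "p * p", OF bounded] by (simp add: a_def)
  ultimately have "a 1 \<le> a 0" by (rule bounded_log_convex_imp_le)
  then show ?thesis by (simp add: a_def)
qed

lemma moment_functional_square_mult_1_minus_X2_nonneg:
  "0 \<le> moment_functional q (p * p * ([:1, 1:] * [:1, -1:]))"
proof -
  have "p * p * ([:1, 1:] * [:1, -1:]) = p * p - monom 1 2 * (p * p)"
    by (rule poly_ext) (simp add: poly_monom algebra_simps power2_eq_square)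
  then show ?thesis
    using moment_functional_monom2_square_le[of p] by (simp add: moment_functional_diff)
qed

lemma moment_functional_square_mult_1_plus_cX_nonneg:
  assumes "c = 1 \<or> c = -1"
  shows "0 \<le> moment_functional q (p * p * [:1, c:])"
proof -
  have "p * p * [:1, c:] = smult (1/2) (([:1, c:] * p) * ([:1, c:] * p))
      + smult (1/2) (p * p * ([:1, 1:] * [:1, -1:]))"
    using assms by (auto intro!: poly_ext simp: algebra_simps)
  then show ?thesis
    using moment_functional_square_mult_1_minus_X2_nonneg[of p]
      moment_functional_square_nonneg[of "[:1, c:] * p"]
    by (simp add: moment_functional_add moment_functional_smult)
qed

lemma moment_functional_Bernstein_nonneg:
  "0 \<le> moment_functional q ([:1, 1:] ^ a * [:1, -1:] ^ b)"
proof -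
  define p :: "real poly" where "p = [:1, 1:] ^ (a div 2) * [:1, -1:] ^ (b div 2)"
  have split_even_odd: "x ^ n = x ^ (n div 2) * x ^ (n div 2) * x ^ (n mod 2)" for x :: "real poly" and n
    by (metis power_add mult_2 div_mult_mod_eq mult.commute)
  have "[:1, 1:] ^ a * [:1, -1:] ^ b = p * p * ([:1, 1:] ^ (a mod 2) * [:1, -1:] ^ (b mod 2))"
    unfolding p_def
    by (subst split_even_odd[of "[:1, 1:]" a], subst split_even_odd[of "[:1, -1:]" b])
       (simp only: ac_simps)
  moreover have "a mod 2 = 0 \<or> a mod 2 = 1" "b mod 2 = 0 \<or> b mod 2 = 1" by auto
  ultimately show ?thesis
    using moment_functional_square_nonneg[of p] moment_functional_square_mult_1_minus_X2_nonneg[of p]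
      moment_functional_square_mult_1_plus_cX_nonneg[OF disjI1[OF refl], of p]
      moment_functional_square_mult_1_plus_cX_nonneg[OF disjI2[OF refl], of p]
    by (elim disjE) (simp_all only: power_0 power_one_right mult_1_right mult_1_left)
qed

end

end

section \<open>Hausdorff's discrete approximations\<close>

lemma sum_choose_mult_choose_power:
  fixes a b :: "'a::comm_ring_1"
  shows "(\<Sum>k\<le>N. of_nat ((N choose k) * (k choose l)) * a ^ k * b ^ (N - k))
         = of_nat (N choose l) * a ^ l * (a + b) ^ (N - l)"
proof (cases "l \<le> N")
  case False
  then show ?thesis by (simp add: binomial_eq_0)
next
  case True
  have "(\<Sum>k\<le>N. of_nat ((N choose k) * (k choose l)) * a ^ k * b ^ (N - k))
      = (\<Sum>k\<in>{l..N}. of_nat ((N choose k) * (k choose l)) * a ^ k * b ^ (N - k))"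
    by (rule sum.mono_neutral_right) (auto simp: binomial_eq_0)
  also have "\<dots> = (\<Sum>j\<in>{0..N-l}. of_nat ((N choose (j + l)) * ((j + l) choose l))
      * a ^ (j + l) * b ^ (N - (j + l)))"
    using sum.shift_bounds_cl_nat_ivl[of "\<lambda>k. of_nat ((N choose k) * (k choose l)) * a ^ k * b ^ (N - k)"
        0 l "N - l"] True
    by simp
  also have "\<dots> = (\<Sum>j\<le>N-l. of_nat (N choose l) * a ^ l * (of_nat ((N - l) choose j) * a ^ j * b ^ (N - l - j)))"
  proof (rule sum.cong)
    fix j assume "j \<in> {..N-l}"
    then have "(N choose (j + l)) * ((j + l) choose l) = (N choose l) * ((N - l) choose j)"
      using choose_mult[of l "j + l" N] True by simp
    then show "of_nat ((N choose (j + l)) * ((j + l) choose l)) * a ^ (j + l) * b ^ (N - (j + l))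
        = of_nat (N choose l) * a ^ l * (of_nat ((N - l) choose j) * a ^ j * b ^ (N - l - j))"
      by (simp add: power_add algebra_simps diff_diff_add)
  qed (auto simp: atLeast0AtMost)
  also have "\<dots> = of_nat (N choose l) * a ^ l * (a + b) ^ (N - l)"
    by (simp add: binomial_ring sum_distrib_left)
  finally show ?thesis .
qed

definition falling_factorial :: "'a::comm_ring_1 \<Rightarrow> nat \<Rightarrow> 'a" where
  "falling_factorial x n = (\<Prod>j<n. x - of_nat j)"

lemma falling_factorial_Suc: "falling_factorial x (Suc n) = falling_factorial x n * (x - of_nat n)"
  by (simp add: falling_factorial_def)

lemma power_eq_sum_Stirling_falling_factorial:
  "x ^ i = (\<Sum>l\<le>i. of_nat (Stirling i l) * falling_factorial x l)"
proof (induction i)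
  case 0
  then show ?case by (simp add: falling_factorial_def)
next
  case (Suc i)
  have x_times: "x * falling_factorial x l = falling_factorial x (Suc l) + of_nat l * falling_factorial x l" for l
    by (simp add: falling_factorial_Suc algebra_simps)
  have "x ^ Suc i = (\<Sum>l\<le>i. of_nat (Stirling i l) * (x * falling_factorial x l))"
    by (simp add: Suc sum_distrib_left algebra_simps)
  also have "\<dots> = (\<Sum>l\<le>i. of_nat (Stirling i l) * falling_factorial x (Suc l))
      + (\<Sum>l\<le>Suc i. of_nat l * of_nat (Stirling i l) * falling_factorial x l)"
    by (simp add: x_times sum.distrib algebra_simps)
  also have "(\<Sum>l\<le>Suc i. of_nat l * of_nat (Stirling i l) * falling_factorial x l)
      = (\<Sum>l\<le>i. of_nat (Suc l) * of_nat (Stirling i (Suc l)) * falling_factorial x (Suc l))"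
    by (subst sum.atMost_Suc_shift) simp
  also have "(\<Sum>l\<le>i. of_nat (Stirling i l) * falling_factorial x (Suc l)) + \<dots>
      = (\<Sum>l\<le>i. of_nat (Stirling (Suc i) (Suc l)) * falling_factorial x (Suc l))"
    by (simp add: sum.distrib[symmetric] algebra_simps)
  also have "\<dots> = (\<Sum>l\<le>Suc i. of_nat (Stirling (Suc i) l) * falling_factorial x l)"
    by (simp only: sum.atMost_Suc_shift) simp
  finally show ?case .
qed

lemma falling_factorial_of_nat: "falling_factorial (real k) l = fact l * real (k choose l)"
proof -
  have "fact l * real (k choose l) = fact l * (real k gchoose l)"
    by (simp add: binomial_gbinomial)
  also have "\<dots> = (\<Prod>i = 0..<l. real k - of_nat i)" by (rule gbinomial_mult_fact)
  finally show ?thesis by (simp add: falling_factorial_def atLeast0LessThan)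
qed

lemma falling_factorial_of_nat_bounds:
  "0 \<le> falling_factorial (real N) l \<and> falling_factorial (real N) l \<le> real N ^ l"
proof -
  have "(N choose l) * fact l \<le> N ^ l" by (rule binomial_fact_pow)
  then have "real ((N choose l) * fact l) \<le> real (N ^ l)" by (simp only: of_nat_le_iff)
  then show ?thesis by (simp add: falling_factorial_of_nat mult.commute)
qed

lemma falling_factorial_over_power_tendsto:
  assumes "l \<le> j"
  shows "(\<lambda>N. falling_factorial (real N) l / real N ^ j) \<longlonglongrightarrow> (if l = j then 1 else 0)"
proof (cases "l = j")
  case True
  have "(\<lambda>N. \<Prod>i<j. 1 - real i * (1 / real N)) \<longlonglongrightarrow> (\<Prod>i<j. 1 - real i * 0)"
    by (intro tendsto_prod tendsto_diff tendsto_const tendsto_mult lim_1_over_n)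
  moreover have "eventually (\<lambda>N. (\<Prod>i<j. 1 - real i * (1 / real N))
      = falling_factorial (real N) l / real N ^ j) sequentially"
    using eventually_gt_at_top[of 0]
  proof eventually_elim
    case (elim N)
    have "falling_factorial (real N) l / real N ^ j = (\<Prod>i<j. real N - real i) / (\<Prod>i<j. real N)"
      by (simp add: falling_factorial_def True)
    also have "\<dots> = (\<Prod>i<j. (real N - real i) / real N)" by (rule prod_dividef[symmetric])
    also have "\<dots> = (\<Prod>i<j. 1 - real i * (1 / real N))"
      using elim by (intro prod.cong) (auto simp: field_simps)
    finally show ?case by simp
  qed
  ultimately show ?thesis using True by (simp add: tendsto_cong)
next
  case False
  with assms have "0 < j - l" by simp
  have "(\<lambda>N. (1 / real N) ^ (j - l)) \<longlonglongrightarrow> 0 ^ (j - l)"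
    by (intro tendsto_power lim_1_over_n)
  moreover have "(0::real) ^ (j - l) = 0" using \<open>0 < j - l\<close> by simp
  ultimately have lim0: "(\<lambda>N. (1 / real N) ^ (j - l)) \<longlonglongrightarrow> 0" by simp
  have "(\<lambda>N. falling_factorial (real N) l / real N ^ j) \<longlonglongrightarrow> 0"
  proof (rule tendsto_sandwich[OF _ _ tendsto_const lim0])
    show "eventually (\<lambda>N. 0 \<le> falling_factorial (real N) l / real N ^ j) sequentially"
      using falling_factorial_of_nat_bounds by auto
    show "eventually (\<lambda>N. falling_factorial (real N) l / real N ^ j \<le> (1 / real N) ^ (j - l)) sequentially"
      using eventually_gt_at_top[of 0]
    proof eventually_elim
      case (elim N)
      have "falling_factorial (real N) l / real N ^ j \<le> real N ^ l / real N ^ j"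
        using falling_factorial_of_nat_bounds[of N l] elim by (intro divide_right_mono) auto
      also have "\<dots> = (1 / real N) ^ (j - l)"
        using elim \<open>0 < j - l\<close> by (simp add: power_diff power_one_over field_simps)
      finally show ?case .
    qed
  qed
  then show ?thesis using False by simp
qed

definition t_poly :: "real poly" where "t_poly = smult (1/2) [:1, 1:]"

definition hausdorff_weight :: "(nat \<Rightarrow> real) \<Rightarrow> nat \<Rightarrow> nat \<Rightarrow> real" where
  "hausdorff_weight q N k =
     real (N choose k) * moment_functional q (t_poly ^ k * (1 - t_poly) ^ (N - k))"

lemma one_minus_t_poly: "1 - t_poly = smult (1/2) [:1, -1:]"
  by (simp add: t_poly_def one_pCons)

definition t_moment :: "(nat \<Rightarrow> real) \<Rightarrow> nat \<Rightarrow> real" where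
  "t_moment q l = moment_functional q (t_poly ^ l)"

lemma hausdorff_weight_nonneg:
  assumes "\<forall>g\<in>finseq. 0 \<le> hankel_form q g" and "\<And>n. \<bar>q n\<bar> \<le> B"
  shows "0 \<le> hausdorff_weight q N k"
proof -
  have "t_poly ^ k * (1 - t_poly) ^ j = smult ((1/2) ^ (k + j)) ([:1, 1:] ^ k * [:1, -1:] ^ j)" for j
    unfolding one_minus_t_poly
    by (simp only: t_poly_def smult_power mult_smult_left mult_smult_right smult_smult
        power_add mult.commute)
  then show ?thesis
    unfolding hausdorff_weight_def
    using moment_functional_Bernstein_nonneg[OF assms, of k "N - k"]
    by (simp add: moment_functional_smult)
qed

lemma sum_hausdorff_weight_choose:
  "(\<Sum>k\<le>N. hausdorff_weight q N k * real (k choose l)) = real (N choose l) * t_moment q l"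
proof -
  have poly_identity: "(\<Sum>k\<le>N. smult (real ((N choose k) * (k choose l)))
      (t_poly ^ k * (1 - t_poly) ^ (N - k))) = smult (real (N choose l)) (t_poly ^ l)"
    using sum_choose_mult_choose_power[of N l t_poly "1 - t_poly"]
    by (simp add: of_nat_poly mult.assoc)
  have "(\<Sum>k\<le>N. real ((N choose k) * (k choose l))
      * moment_functional q (t_poly ^ k * (1 - t_poly) ^ (N - k))) = real (N choose l) * t_moment q l"
    using arg_cong[OF poly_identity, where f = "moment_functional q"]
    by (simp add: moment_functional_sum moment_functional_smult t_moment_def)
  then show ?thesis
    by (simp add: hausdorff_weight_def algebra_simps)
qed

lemma sum_hausdorff_weight_power:
  "(\<Sum>k\<le>N. hausdorff_weight q N k * real k ^ j)
     = (\<Sum>l\<le>j. real (Stirling j l) * falling_factorial (real N) l * t_moment q l)"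
proof -
  have "(\<Sum>k\<le>N. hausdorff_weight q N k * real k ^ j)
      = (\<Sum>k\<le>N. \<Sum>l\<le>j. real (Stirling j l) * fact l * (hausdorff_weight q N k * real (k choose l)))"
    by (simp add: power_eq_sum_Stirling_falling_factorial[of "real _"] falling_factorial_of_nat
        sum_distrib_left algebra_simps)
  also have "\<dots> = (\<Sum>l\<le>j. real (Stirling j l) * fact l * (\<Sum>k\<le>N. hausdorff_weight q N k * real (k choose l)))"
    by (simp add: sum.swap[of _ "{..N}"] sum_distrib_left)
  also have "\<dots> = (\<Sum>l\<le>j. real (Stirling j l) * falling_factorial (real N) l * t_moment q l)"
    by (simp only: sum_hausdorff_weight_choose falling_factorial_of_nat) (simp add: algebra_simps)
  finally show ?thesis .
qed

lemma hausdorff_weight_t_moments_tendsto: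
  "(\<lambda>N. \<Sum>k\<le>N. hausdorff_weight q N k * (real k / real N) ^ j) \<longlonglongrightarrow> t_moment q j"
proof -
  have "(\<Sum>k\<le>N. hausdorff_weight q N k * (real k / real N) ^ j)
      = (\<Sum>l\<le>j. real (Stirling j l) * t_moment q l * (falling_factorial (real N) l / real N ^ j))" for N
  proof -
    have "(\<Sum>k\<le>N. hausdorff_weight q N k * (real k / real N) ^ j)
        = (\<Sum>k\<le>N. hausdorff_weight q N k * real k ^ j) / real N ^ j"
      by (simp add: power_divide sum_divide_distrib)
    then show ?thesis
      by (simp only: sum_hausdorff_weight_power sum_divide_distrib) (simp add: algebra_simps)
  qed
  moreover have "(\<lambda>N. \<Sum>l\<le>j. real (Stirling j l) * t_moment q l * (falling_factorial (real N) l / real N ^ j))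
      \<longlonglongrightarrow> (\<Sum>l\<le>j. real (Stirling j l) * t_moment q l * (if l = j then 1 else 0))"
    by (intro tendsto_sum tendsto_mult tendsto_const falling_factorial_over_power_tendsto) simp
  moreover have "(\<Sum>l\<le>j. real (Stirling j l) * t_moment q l * (if l = j then 1 else 0)) = t_moment q j"
    by (simp add: if_distrib[of "\<lambda>x. _ * x"] cong: if_cong)
  ultimately show ?thesis by simp
qed

lemma moment_eq_sum_t_moment:
  "q i = (\<Sum>j\<le>i. real (i choose j) * 2 ^ j * (-1) ^ (i - j) * t_moment q j)"
proof -
  have "monom 1 i = (smult 2 t_poly + [:-1:]) ^ i"
    by (simp add: t_poly_def monom_altdef)
  also have "\<dots> = (\<Sum>j\<le>i. of_nat (i choose j) * (smult 2 t_poly) ^ j * [:-1:] ^ (i - j))"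
    by (rule binomial_ring)
  also have "\<dots> = (\<Sum>j\<le>i. smult (real (i choose j) * 2 ^ j * (-1) ^ (i - j)) (t_poly ^ j))"
    by (intro sum.cong refl) (simp add: poly_const_pow of_nat_poly smult_power mult_ac)
  finally have "moment_functional q (monom 1 i) = moment_functional q
      (\<Sum>j\<le>i. smult (real (i choose j) * 2 ^ j * (-1) ^ (i - j)) (t_poly ^ j))"
    by (rule arg_cong)
  then show ?thesis
    by (simp add: moment_functional_sum moment_functional_smult moment_functional_monom t_moment_def)
qed

lemma hausdorff_weight_moments_tendsto:
  "(\<lambda>N. \<Sum>k\<le>N. hausdorff_weight q N k * (2 * real k / real N - 1) ^ i) \<longlonglongrightarrow> q i"
proof -
  have "(2 * real k / real N - 1) ^ i
      = (\<Sum>j\<le>i. real (i choose j) * 2 ^ j * (-1) ^ (i - j) * (real k / real N) ^ j)" for k N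
  proof -
    have "(2 * real k / real N - 1) ^ i = (2 * (real k / real N) + (-1)) ^ i" by simp
    also have "\<dots> = (\<Sum>j\<le>i. of_nat (i choose j) * (2 * (real k / real N)) ^ j * (-1) ^ (i - j))"
      by (rule binomial_ring)
    finally show ?thesis by (simp only: power_mult_distrib) (simp add: algebra_simps)
  qed
  then have "(\<Sum>k\<le>N. hausdorff_weight q N k * (2 * real k / real N - 1) ^ i)
      = (\<Sum>j\<le>i. real (i choose j) * 2 ^ j * (-1) ^ (i - j)
           * (\<Sum>k\<le>N. hausdorff_weight q N k * (real k / real N) ^ j))" for N
    by (simp add: sum_distrib_left sum.swap[of _ "{..N}"] algebra_simps)
  then show ?thesis
    unfolding moment_eq_sum_t_moment[of q i]
    by (simp only:) (intro tendsto_sum tendsto_mult tendsto_const hausdorff_weight_t_moments_tendsto)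
qed

section \<open>The representing measure\<close>

lemma finite_discrete_distribution:
  fixes w x :: "nat \<Rightarrow> real"
  assumes nonneg: "\<And>k. k \<le> n \<Longrightarrow> 0 \<le> w k" and total: "(\<Sum>k\<le>n. w k) = 1"
  shows "\<exists>\<mu>. real_distribution \<mu> \<and> (AE y in \<mu>. y \<in> x ` {..n}) \<and>
           (\<forall>f \<in> borel_measurable borel. integral\<^sup>L \<mu> f = (\<Sum>k\<le>n. w k * f (x k)))"
proof -
  define v where "v k = (if k \<le> n then w k else 0)" for k
  have v_nonneg: "0 \<le> v k" for k by (simp add: v_def nonneg)
  have "(\<integral>\<^sup>+k. ennreal (v k) \<partial>count_space UNIV) = (\<Sum>k\<le>n. ennreal (v k))"
    by (rule nn_integral_count_space') (auto simp: v_def)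
  also have "\<dots> = ennreal (\<Sum>k\<le>n. v k)"
    using v_nonneg by (rule sum_ennreal)
  also have "\<dots> = 1"
    using total by (simp add: v_def)
  finally have pmf_v: "pmf (embed_pmf v) k = v k" for k
    by (rule pmf_embed_pmf[OF v_nonneg])
  then have set_pmf_v: "set_pmf (embed_pmf v) \<subseteq> {..n}"
    by (auto simp: set_pmf_eq v_def split: if_splits)
  define \<mu> where "\<mu> = distr (measure_pmf (embed_pmf v)) borel x"
  have "real_distribution \<mu>"
    unfolding real_distribution_def real_distribution_axioms_def \<mu>_def
    by (auto intro!: prob_space.prob_space_distr prob_space_measure_pmf)
  moreover have "AE y in \<mu>. y \<in> x ` {..n}"
    unfolding \<mu>_def using set_pmf_v
    by (subst AE_distr_iff) (auto simp: AE_measure_pmf_iff intro: borel_closed finite_imp_closed)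
  moreover have "integral\<^sup>L \<mu> f = (\<Sum>k\<le>n. w k * f (x k))" if "f \<in> borel_measurable borel" for f
  proof -
    have "integral\<^sup>L \<mu> f = (\<integral>k. f (x k) \<partial>measure_pmf (embed_pmf v))"
      unfolding \<mu>_def by (rule integral_distr) (auto simp: that)
    also have "\<dots> = (\<Sum>k\<le>n. f (x k) * pmf (embed_pmf v) k)"
      by (rule integral_measure_pmf_real) (use set_pmf_v in auto)
    finally show ?thesis by (simp add: pmf_v v_def mult.commute)
  qed
  ultimately show ?thesis by blast
qed

lemma moments_limit_distribution:
  fixes \<mu> :: "nat \<Rightarrow> real measure"
  assumes distr: "\<And>N. real_distribution (\<mu> N)"
    and support: "\<And>N. AE x in \<mu> N. \<bar>x\<bar> \<le> 1"
    and moments: "\<And>i. (\<lambda>N. \<integral>x. x ^ i \<partial>\<mu> N) \<longlonglongrightarrow> m i"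
  shows "\<exists>M. real_distribution M \<and> (\<forall>i. integrable M (\<lambda>x. x ^ i) \<and> (\<integral>x. x ^ i \<partial>M) = m i)"
proof -
  have measurable_\<mu>: "f \<in> borel_measurable (\<mu> N)" if "f \<in> borel_measurable borel" for f :: "real \<Rightarrow> real" and N
    using that measurable_cong_sets[OF real_distribution.events_eq_borel[OF distr] refl] by blast
  have "tight \<mu>"
    unfolding tight_def
  proof (intro conjI allI impI)
    show "real_distribution (\<mu> N)" for N by (rule distr)
    have "measure (\<mu> N) {-2<..2} = 1" for N
    proof -
      interpret real_distribution "\<mu> N" by (rule distr)
      show ?thesis using support[of N] by (subst prob_eq_1) (auto elim!: AE_mp)
    qed
    then show "\<exists>a b. a < b \<and> (\<forall>N. 1 - \<epsilon> < measure (\<mu> N) {a<..b})" if "0 < \<epsilon>" for \<epsilon> :: real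
      using that by (intro exI[of _ "-2"] exI[of _ 2]) auto
  qed
  then obtain r M where r: "strict_mono r" and "real_distribution M" and conv: "weak_conv_m (\<mu> \<circ> r) M"
    using tight_imp_convergent_subsubsequence[OF _ strict_mono_id] by fastforce
  interpret M: real_distribution M by fact
  have integral_tendsto: "(\<lambda>N. \<integral>x. f x \<partial>\<mu> (r N)) \<longlonglongrightarrow> (\<integral>x. f x \<partial>M)"
    if "\<And>x. isCont f x" "\<And>x. \<bar>f x\<bar> \<le> 1" for f :: "real \<Rightarrow> real"
    using weak_conv_imp_integral_bdd_continuous_conv[of "\<mu> \<circ> r" M f 1] that distr conv
    by (simp add: comp_def \<open>real_distribution M\<close>)
  \<comment> \<open>Powers are unbounded, so weak convergence is applied to clipped powers, which agree
    with the powers on the supports.\<close>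
  define clip where "clip x = max (-1) (min 1 x)" for x :: real
  have clip_pow_cont: "isCont (\<lambda>x. clip x ^ i) x" for x i
    unfolding clip_def by (intro continuous_intros)
  have clip_pow_bound: "\<bar>clip x ^ i\<bar> \<le> 1" for x i
    by (simp add: clip_def power_abs power_le_one)
  have clip_AE: "AE x in N. clip x ^ i = x ^ i" if "AE x in N. \<bar>x\<bar> \<le> 1" for N i
    using that by eventually_elim (simp add: clip_def)
  have "AE x in M. \<bar>x\<bar> \<le> 1"
  proof -
    define excess :: "real \<Rightarrow> real" where "excess = (\<lambda>x. min 1 (max 0 (\<bar>x\<bar> - 1)))"
    have "(\<integral>x. excess x \<partial>\<mu> N) = 0" for N
      using support[of N]
      by (subst integral_cong_AE[where g = "\<lambda>_. 0"]) (auto simp: excess_def intro!: measurable_\<mu>)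
    then have "(\<lambda>N. \<integral>x. excess x \<partial>\<mu> (r N)) \<longlonglongrightarrow> 0" by simp
    moreover have "(\<lambda>N. \<integral>x. excess x \<partial>\<mu> (r N)) \<longlonglongrightarrow> (\<integral>x. excess x \<partial>M)"
      by (rule integral_tendsto) (auto simp: excess_def intro!: continuous_intros)
    ultimately have "(\<integral>x. excess x \<partial>M) = 0" by (rule LIMSEQ_unique[rotated])
    moreover have "integrable M excess"
      by (rule M.integrable_const_bound[where B = 1]) (auto simp: excess_def)
    ultimately have "AE x in M. excess x = 0"
      by (subst integral_nonneg_eq_0_iff_AE[symmetric]) (auto simp: excess_def)
    then show ?thesis by eventually_elim (auto simp: excess_def)
  qed
  then have clip_AE_M: "AE x in M. clip x ^ i = x ^ i" for i by (rule clip_AE)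
  have "integrable M (\<lambda>x. x ^ i)" for i
    using clip_AE_M[of i] clip_pow_bound
    by (intro integrable_cong_AE[THEN iffD1, OF _ _ _ M.integrable_const_bound[where B = 1]])
       (auto simp: clip_def)
  moreover have "(\<integral>x. x ^ i \<partial>M) = m i" for i
  proof (rule LIMSEQ_unique)
    have "(\<integral>x. x ^ i \<partial>\<mu> N) = (\<integral>x. clip x ^ i \<partial>\<mu> N)" for N
      using clip_AE[OF support[of N], of i]
      by (intro integral_cong_AE) (auto simp: clip_def intro!: measurable_\<mu>)
    then show "(\<lambda>N. \<integral>x. x ^ i \<partial>\<mu> (r N)) \<longlonglongrightarrow> (\<integral>x. x ^ i \<partial>M)"
      using integral_tendsto[OF clip_pow_cont clip_pow_bound, of i]
        integral_cong_AE[OF _ _ clip_AE_M[of i]]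
      by (simp add: clip_def)
    show "(\<lambda>N. \<integral>x. x ^ i \<partial>\<mu> (r N)) \<longlonglongrightarrow> m i"
      using LIMSEQ_subseq_LIMSEQ[OF moments r] by (simp add: comp_def)
  qed
  ultimately show ?thesis using \<open>real_distribution M\<close> by blast
qed

lemma normalized_moment_distribution:
  assumes hankel_nonneg: "\<forall>g\<in>finseq. 0 \<le> hankel_form q g" and bounded: "\<And>n. \<bar>q n\<bar> \<le> B"
    and "0 < q 0"
  shows "\<exists>M. real_distribution M \<and> (\<forall>i. integrable M (\<lambda>x. x ^ i) \<and> (\<integral>x. x ^ i \<partial>M) = q i / q 0)"
proof -
  define w where "w N k = hausdorff_weight q (Suc N) k / q 0" for N k
  define node where "node N k = 2 * real k / real (Suc N) - 1" for N k
  have "t_moment q 0 = q 0" by (simp add: t_moment_def)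
  then have "(\<Sum>k\<le>Suc N. w N k) = 1" for N
    using sum_hausdorff_weight_choose[of q "Suc N" 0] \<open>0 < q 0\<close>
    by (simp add: w_def flip: sum_divide_distrib)
  moreover have "0 \<le> w N k" for N k
    using hausdorff_weight_nonneg[OF hankel_nonneg bounded] \<open>0 < q 0\<close> by (simp add: w_def)
  ultimately have "\<forall>N. \<exists>\<mu>. real_distribution \<mu> \<and> (AE y in \<mu>. y \<in> node N ` {..Suc N}) \<and>
      (\<forall>f \<in> borel_measurable borel. integral\<^sup>L \<mu> f = (\<Sum>k\<le>Suc N. w N k * f (node N k)))"
    by (intro allI finite_discrete_distribution)
  from choice[OF this] obtain \<mu> where \<mu>: "\<forall>N. real_distribution (\<mu> N) \<and>
      (AE y in \<mu> N. y \<in> node N ` {..Suc N}) \<and>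
      (\<forall>f \<in> borel_measurable borel. integral\<^sup>L (\<mu> N) f = (\<Sum>k\<le>Suc N. w N k * f (node N k)))"
    by (elim exE)
  show ?thesis
  proof (rule moments_limit_distribution)
    show "real_distribution (\<mu> N)" for N using \<mu> by simp
    show "AE y in \<mu> N. \<bar>y\<bar> \<le> 1" for N
      using \<mu>[rule_format, of N] by (auto elim!: AE_mp simp: node_def field_simps)
    have "(\<integral>x. x ^ i \<partial>\<mu> N)
        = (\<Sum>k\<le>Suc N. hausdorff_weight q (Suc N) k * (2 * real k / real (Suc N) - 1) ^ i) / q 0" for N i
      using \<mu> by (simp add: w_def node_def sum_divide_distrib del: sum.atMost_Suc)
    then show "(\<lambda>N. \<integral>x. x ^ i \<partial>\<mu> N) \<longlonglongrightarrow> q i / q 0" for i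
      using LIMSEQ_Suc[OF hausdorff_weight_moments_tendsto[of q i]]
      by (simp only:) (intro tendsto_divide tendsto_const, use \<open>0 < q 0\<close> in auto)
  qed
qed

lemma emeasure_outside_unit_interval_eq_0:
  fixes M :: "real measure"
  assumes "finite_measure M" and "sets M = sets borel"
    and integrable: "\<And>n. integrable M (\<lambda>x. x ^ n)"
    and even_moments: "(\<lambda>n. \<integral>x. x ^ (2 * n) \<partial>M) \<longlonglongrightarrow> 0"
  shows "emeasure M (UNIV - {-1<..<1}) = 0"
proof -
  interpret finite_measure M by fact
  define A where "A = UNIV - {-1<..<1::real}"
  have A_sets: "A \<in> sets M" using assms(2) by (simp add: A_def)
  have "measure M A \<le> (\<integral>x. x ^ (2 * n) \<partial>M)" for n
  proof -
    have "measure M A = (\<integral>x. indicator A x \<partial>M)" using A_sets by simp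
    also have "\<dots> \<le> (\<integral>x. x ^ (2 * n) \<partial>M)"
    proof (rule integral_mono)
      show "integrable M (indicator A :: real \<Rightarrow> real)"
        using A_sets by (simp add: emeasure_eq_measure)
      show "indicator A x \<le> x ^ (2 * n)" for x
      proof (cases "x \<in> A")
        case True
        then have "1 \<le> \<bar>x\<bar> ^ (2 * n)" by (intro one_le_power) (auto simp: A_def)
        then show ?thesis using True by (simp add: power_even_abs)
      qed (simp add: zero_le_power_eq)
    qed (rule integrable)
    finally show ?thesis .
  qed
  then have "measure M A \<le> 0"
    by (intro LIMSEQ_le_const[OF even_moments]) auto
  then show ?thesis
    by (simp add: A_def[symmetric] emeasure_eq_measure measure_nonneg antisym)
qed

lemma moment_measure_if_hankel_nonneg_tendsto_zero:
  assumes hankel_nonneg: "\<forall>g\<in>finseq. 0 \<le> hankel_form q g" and "q \<longlonglongrightarrow> 0"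
  shows "\<exists>M :: real measure. sets M = sets borel \<and>
           (\<forall>n. integrable M (\<lambda>\<mu>. \<mu> ^ n) \<and> q n = (\<integral>\<mu>. \<mu> ^ n \<partial>M)) \<and>
           emeasure M (UNIV - {-1<..<1}) = 0"
proof -
  obtain B where bounded: "\<And>n. \<bar>q n\<bar> \<le> B"
    using convergent_imp_Bseq[of q] \<open>q \<longlonglongrightarrow> 0\<close> by (auto simp: Bseq_def convergent_def)
  have "0 \<le> q 0"
    using moment_functional_square_nonneg[OF hankel_nonneg, of 1] by simp
  show ?thesis
  proof (cases "q 0 = 0")
    case True
    have "(q n)\<^sup>2 \<le> q 0 * q (2 * n)" for n
      using moment_functional_Cauchy_Schwarz[OF hankel_nonneg, of 1 "monom 1 n"]
      by (simp add: moment_functional_monom mult_monom mult_2)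
    then have "q n = 0" for n using True by simp
    then show ?thesis by (intro exI[of _ "null_measure borel"]) auto
  next
    case False
    with \<open>0 \<le> q 0\<close> have "0 < q 0" by simp
    then obtain M' where "real_distribution M'"
      and M': "\<And>i. integrable M' (\<lambda>x. x ^ i) \<and> (\<integral>x. x ^ i \<partial>M') = q i / q 0"
      using normalized_moment_distribution[OF hankel_nonneg bounded] by blast
    interpret M': real_distribution M' by fact
    have "(\<lambda>n. q (2 * n) / q 0) \<longlonglongrightarrow> 0 / q 0"
      using LIMSEQ_subseq_LIMSEQ[OF \<open>q \<longlonglongrightarrow> 0\<close>, of "\<lambda>n. 2 * n"] \<open>0 < q 0\<close>
      by (intro tendsto_divide tendsto_const) (auto simp: strict_mono_def comp_def)
    then have "emeasure M' (UNIV - {-1<..<1}) = 0"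
      using M' by (intro emeasure_outside_unit_interval_eq_0) (auto intro: M'.finite_measure_axioms)
    moreover define M where "M = density M' (\<lambda>_. ennreal (q 0))"
    ultimately show ?thesis
      using M' \<open>0 < q 0\<close>
      by (intro exI[of _ M])
         (auto simp: M_def integrable_density integral_density emeasure_density
            nn_integral_cmult_indicator)
  qed
qed

lemma moment_quadratic_form_nonneg:
  fixes M :: "real measure" and c :: "nat \<Rightarrow> real"
  assumes "\<And>n. integrable M (\<lambda>x. x ^ n)" and "finite S"
  shows "0 \<le> (\<Sum>n\<in>S. \<Sum>m\<in>S. (\<integral>x. x ^ (n + m) \<partial>M) * c m * c n)"
proof -
  have "(\<Sum>n\<in>S. \<Sum>m\<in>S. (\<integral>x. x ^ (n + m) \<partial>M) * c m * c n)
      = (\<integral>x. (\<Sum>n\<in>S. \<Sum>m\<in>S. c m * c n * x ^ (n + m)) \<partial>M)"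
    using assms by (simp add: integral_sum mult_ac)
  also have "\<dots> = (\<integral>x. (\<Sum>m\<in>S. c m * x ^ m)\<^sup>2 \<partial>M)"
    by (simp add: power2_eq_square sum_distrib_left sum_distrib_right power_add mult_ac)
  also have "\<dots> \<ge> 0" by simp
  finally show ?thesis .
qed

lemma hankel_form_nonneg_if_moments:
  assumes "\<And>n. integrable M (\<lambda>x. x ^ n)" and moments: "\<And>n. q n = (\<integral>x. x ^ n \<partial>M)"
    and "g \<in> finseq"
  shows "0 \<le> hankel_form q g"
proof -
  define S where "S = {k. g k \<noteq> 0}"
  have "finite S" using \<open>g \<in> finseq\<close> by (simp add: finseq_def S_def)
  have "Re (hankel_form q g) = (\<Sum>n\<in>S. \<Sum>m\<in>S. q (n + m) * Re (g m) * Re (g n))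
      + (\<Sum>n\<in>S. \<Sum>m\<in>S. q (n + m) * Im (g m) * Im (g n))"
    unfolding hankel_form_def S_def[symmetric]
    by (simp add: Re_sum sum.distrib[symmetric] algebra_simps)
  then have "0 \<le> Re (hankel_form q g)"
    using moment_quadratic_form_nonneg[OF assms(1) \<open>finite S\<close>, of "\<lambda>k. Re (g k)"]
      moment_quadratic_form_nonneg[OF assms(1) \<open>finite S\<close>, of "\<lambda>k. Im (g k)"]
    by (simp add: moments)
  moreover have "Im (hankel_form q g) = 0"
  proof -
    have "Im (hankel_form q g) = (\<Sum>n\<in>S. \<Sum>m\<in>S. q (n + m) * Im (g m) * Re (g n))
        - (\<Sum>n\<in>S. \<Sum>m\<in>S. q (n + m) * Re (g m) * Im (g n))"
      unfolding hankel_form_def S_def[symmetric]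
      by (simp add: Im_sum sum_subtractf[symmetric] algebra_simps)
    moreover have "(\<Sum>n\<in>S. \<Sum>m\<in>S. q (n + m) * Im (g m) * Re (g n))
        = (\<Sum>n\<in>S. \<Sum>m\<in>S. q (n + m) * Re (g m) * Im (g n))"
      by (subst sum.swap) (simp add: add.commute mult_ac)
    ultimately show ?thesis by simp
  qed
  ultimately show ?thesis by (simp add: less_eq_complex_def)
qed

lemma moments_tendsto_zero:
  fixes M :: "real measure"
  assumes integrable: "\<And>n. integrable M (\<lambda>x. x ^ n)"
    and "sets M = sets borel" and "emeasure M (UNIV - {-1<..<1}) = 0"
  shows "(\<lambda>n. \<integral>x. x ^ n \<partial>M) \<longlonglongrightarrow> 0"
proof -
  have "AE x in M. \<bar>x\<bar> < 1"
    using assms(2,3) by (intro AE_I'[of "UNIV - {-1<..<1}"]) (auto simp: null_sets_def)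
  have "(\<lambda>n. \<integral>x. x ^ n \<partial>M) \<longlonglongrightarrow> (\<integral>x. 0 \<partial>M)"
  proof (rule integral_dominated_convergence[where w = "\<lambda>_. 1"])
    show "(\<lambda>x. x ^ n) \<in> borel_measurable M" for n
      using integrable by (rule borel_measurable_integrable)
    show "integrable M (\<lambda>_. 1::real)" using integrable[of 0] by simp
    show "AE x in M. (\<lambda>n. x ^ n) \<longlonglongrightarrow> 0"
      using \<open>AE x in M. \<bar>x\<bar> < 1\<close> by eventually_elim (simp add: LIMSEQ_power_zero)
    show "AE x in M. norm (x ^ n) \<le> 1" for n
      using \<open>AE x in M. \<bar>x\<bar> < 1\<close> by eventually_elim (auto simp: power_abs intro!: power_le_one)
  qed simp
  then show ?thesis by simp
qed

lemma hankel_nonneg_tendsto_zero_if_moment_measure: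
  fixes M :: "real measure"
  assumes "sets M = sets borel"
    and "\<forall>n. integrable M (\<lambda>x. x ^ n) \<and> q n = (\<integral>x. x ^ n \<partial>M)"
    and "emeasure M (UNIV - {-1<..<1}) = 0"
  shows "(\<forall>g\<in>finseq. 0 \<le> hankel_form q g) \<and> q \<longlonglongrightarrow> 0"
proof
  have integrable: "\<And>n. integrable M (\<lambda>x. x ^ n)" and moments: "\<And>n. q n = (\<integral>x. x ^ n \<partial>M)"
    using assms(2) by auto
  show "\<forall>g\<in>finseq. 0 \<le> hankel_form q g"
    using hankel_form_nonneg_if_moments[OF integrable moments] by blast
  show "q \<longlonglongrightarrow> 0"
    using moments_tendsto_zero[OF integrable assms(1,3)] by (simp add: moments[abs_def])
qed

theorem proposition4p1:
  fixes q :: "nat \<Rightarrow> real"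
  shows "(\<exists>M :: real measure.
            sets M = sets borel \<and>
            (\<forall>n. integrable M (\<lambda>\<mu>. \<mu> ^ n) \<and> q n = (\<integral>\<mu>. \<mu> ^ n \<partial>M)) \<and>
            emeasure M (UNIV - {-1<..<1}) = 0)
         \<longleftrightarrow>
         ((\<forall>g\<in>finseq. 0 \<le> hankel_form q g) \<and> q \<longlonglongrightarrow> 0)"
  by (intro iffI; elim exE conjE)
     (rule hankel_nonneg_tendsto_zero_if_moment_measure moment_measure_if_hankel_nonneg_tendsto_zero;
      assumption)+

end
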